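(* Let $G$ be an abelian group and $B=\bigoplus_{i\in G}B_i$ a $G$-graded integral domain containing $\mathbb{Q}$. Suppose $d\in G$ has infinite order and $D:B^{(d)}\to B^{(d)}$ is a nonzero homogeneous locally nilpotent derivation with $\ker D\not\subseteq B_0$. Then some element of $D(B^{(d)})\cap\ker(D)$ is a cylindrical element of $B$.
   Context: $B^{(d)}=\bigoplus_{i\in\langle d\rangle}B_i$, where $\langle d\rangle$ is the subgroup generated by $d$. A derivation is homogeneous if it shifts degrees by a fixed element of the group; locally nilpotent if every element is killed by some power. For nonzero homogeneous $f$, $B_{(f)}$ is the degree-$0$ subring of $B_f=S^{-1}B$, $S=\{1,f,f^2,\dots\}$. A ring is a polynomial ring in one variable if it is a polynomial ring in one variable over some subring (zero ring counts). For a $G$-graded ring $B$, an element $f$ is cylindrical if it is nonzero and homogeneous, $\deg(f)\in G$ has infinite order, and $B_{(f)}$ is a polynomial ring in one variable. *)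

theory Defs
  imports Main "HOL-Computational_Algebra.Fraction_Field" "HOL-Computational_Algebra.Polynomial"
begin

text \<open>The ring B is the whole type 'b (an integral domain); the grading is a family
  Bc :: 'g => 'b set of homogeneous components.\<close>

fun nmul :: "nat \<Rightarrow> 'g::ab_group_add \<Rightarrow> 'g" where
  "nmul 0 g = 0"
| "nmul (Suc n) g = g + nmul n g"

definition zmul :: "int \<Rightarrow> 'g::ab_group_add \<Rightarrow> 'g" where
  "zmul k g = (if 0 \<le> k then nmul (nat k) g else - nmul (nat (- k)) g)"

definition cyclic_subgroup :: "'g::ab_group_add \<Rightarrow> 'g set" where
  "cyclic_subgroup d = range (\<lambda>k. zmul k d)"

definition infinite_order :: "'g::ab_group_add \<Rightarrow> bool" where
  "infinite_order g \<longleftrightarrow> (\<forall>n>0. nmul n g \<noteq> 0)"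

definition graded_ring :: "('g::ab_group_add \<Rightarrow> 'b::comm_ring_1 set) \<Rightarrow> bool" where
  "graded_ring Bc \<longleftrightarrow>
     (\<forall>i. 0 \<in> Bc i \<and> (\<forall>x\<in>Bc i. \<forall>y\<in>Bc i. x + y \<in> Bc i) \<and> (\<forall>x\<in>Bc i. - x \<in> Bc i)) \<and>
     (\<forall>i j x y. x \<in> Bc i \<longrightarrow> y \<in> Bc j \<longrightarrow> x * y \<in> Bc (i + j)) \<and>
     (\<forall>x. \<exists>!c. (\<forall>i. c i \<in> Bc i) \<and> finite {i. c i \<noteq> 0} \<and> x = (\<Sum>i\<in>{i. c i \<noteq> 0}. c i))"

definition veronese :: "('g::ab_group_add \<Rightarrow> 'b::comm_ring_1 set) \<Rightarrow> 'g \<Rightarrow> 'b set" where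
  "veronese Bc d = {x. \<exists>c. (\<forall>i. c i \<in> Bc i) \<and> finite {i. c i \<noteq> 0} \<and>
       {i. c i \<noteq> 0} \<subseteq> cyclic_subgroup d \<and> x = (\<Sum>i\<in>{i. c i \<noteq> 0}. c i)}"

definition homogeneous :: "('g \<Rightarrow> 'b set) \<Rightarrow> 'b \<Rightarrow> bool" where
  "homogeneous Bc x \<longleftrightarrow> (\<exists>i. x \<in> Bc i)"

definition derivation_on :: "'b::comm_ring_1 set \<Rightarrow> ('b \<Rightarrow> 'b) \<Rightarrow> bool" where
  "derivation_on R D \<longleftrightarrow> (\<forall>x\<in>R. D x \<in> R) \<and>
     (\<forall>x\<in>R. \<forall>y\<in>R. D (x + y) = D x + D y) \<and>
     (\<forall>x\<in>R. \<forall>y\<in>R. D (x * y) = x * D y + y * D x)"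

definition homogeneous_derivation_on :: "('g::ab_group_add \<Rightarrow> 'b::comm_ring_1 set) \<Rightarrow> 'g \<Rightarrow> ('b \<Rightarrow> 'b) \<Rightarrow> bool" where
  "homogeneous_derivation_on Bc d D \<longleftrightarrow> derivation_on (veronese Bc d) D \<and>
     (\<exists>e. \<forall>i\<in>cyclic_subgroup d. \<forall>x\<in>Bc i. D x \<in> Bc (i + e))"

definition locally_nilpotent_on :: "'b::zero set \<Rightarrow> ('b \<Rightarrow> 'b) \<Rightarrow> bool" where
  "locally_nilpotent_on R D \<longleftrightarrow> (\<forall>x\<in>R. \<exists>n. (D ^^ n) x = 0)"

text \<open>B_(f): degree-0 part of B_f, realised inside the fraction field of B:
  elements b/f^n with b homogeneous of degree n*deg f.\<close>
definition degree0_localization :: "('g::ab_group_add \<Rightarrow> 'b::idom set) \<Rightarrow> 'g \<Rightarrow> 'b \<Rightarrow> 'b fract set" where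
  "degree0_localization Bc i f = {Fraction_Field.Fract b (f ^ n) | b n. b \<in> Bc (nmul n i)}"

definition is_subring :: "'a::comm_ring_1 set \<Rightarrow> bool" where
  "is_subring S \<longleftrightarrow> 0 \<in> S \<and> 1 \<in> S \<and> (\<forall>x\<in>S. \<forall>y\<in>S. x + y \<in> S \<and> x * y \<in> S) \<and> (\<forall>x\<in>S. - x \<in> S)"

definition polynomial_ring_one_var :: "'a::comm_ring_1 set \<Rightarrow> bool" where
  "polynomial_ring_one_var R \<longleftrightarrow> (\<exists>A t. is_subring A \<and> A \<subseteq> R \<and> t \<in> R \<and>
     bij_betw (\<lambda>p. poly p t) {p. \<forall>k. coeff p k \<in> A} R)"

definition cylindrical :: "('g::ab_group_add \<Rightarrow> 'b::idom set) \<Rightarrow> 'b \<Rightarrow> bool" where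
  "cylindrical Bc f \<longleftrightarrow> f \<noteq> 0 \<and>
     (\<exists>i. f \<in> Bc i \<and> infinite_order i \<and> polynomial_ring_one_var (degree0_localization Bc i f))"

end

theory Submission
  imports Defs "HOL-Computational_Algebra.Polynomial_Factorial"
begin

text \<open>Through k \<mapsto> zmul k d the Veronese subring B^(d) is Z-graded, and D is homogeneous of
  some degree \<epsilon> (one has e \<in> \<langle>d\<rangle> because D is nonzero). Local nilpotency yields a homogeneous
  local slice r, i.e. D r \<noteq> 0 = D (D r). Over a ring containing Q, r is transcendental over
  the kernel K of D, and by the slice theorem (D r)^N b lies in K[r] for every b.

  Let m > 0 generate the group of integers j for which j \<epsilon> is a difference of degrees of nonzero
  homogeneous kernel elements. Multiplying r by a suitable homogeneous kernel element produces
  homogeneous u, u' \<in> K with u u' = (D r)^2 and deg (u r^m) = (m + 1) deg (D r), while a kernel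
  element of nonzero degree makes deg (D r) \<noteq> 0. Then B_(D r) is the polynomial ring in
  t = u r^m / (D r)^(m+1) over the degree-0 fractions k / (D r)^n with k \<in> K: a degree-0 term
  k r^j / (D r)^n has m dividing j, and for j = m q it equals
  (k (D r)^((m+1) q) u'^q / (D r)^(n+2q)) t^q.\<close>

section \<open>Integer multiples in an abelian group\<close>

lemma nmul_add: "nmul (m + n) g = nmul m g + nmul n g"
  by (induction m) (simp_all add: add.assoc)

lemma nmul_add_right: "nmul n (a + b) = nmul n a + nmul n b"
  by (induction n) (simp_all add: algebra_simps)

lemma zmul_0 [simp]: "zmul 0 g = 0"
  by (simp add: zmul_def)

lemma zmul_succ: "zmul (k + 1) g = zmul k g + g"
proof (cases "k \<ge> 0")
  case True
  then have "nat (k + 1) = Suc (nat k)" by simp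
  with True show ?thesis by (simp add: zmul_def add.commute)
next
  case False
  show ?thesis
  proof (cases "k = -1")
    case False
    with \<open>\<not> k \<ge> 0\<close> have "nat (- k) = Suc (nat (- (k + 1)))" by simp
    with \<open>\<not> k \<ge> 0\<close> False show ?thesis by (simp add: zmul_def)
  qed (simp add: zmul_def)
qed

lemma zmul_add: "zmul (a + b) g = zmul a g + zmul b g"
proof (induction b rule: int_induct[where k = 0])
  case (step1 i)
  then show ?case
    using zmul_succ[of "a + i" g] zmul_succ[of i g] by (simp add: add.assoc[symmetric])
next
  case (step2 i)
  then show ?case
    using zmul_succ[of "a + (i - 1)" g] zmul_succ[of "i - 1" g] by (simp add: algebra_simps)
qed simp

lemma zmul_uminus: "zmul (- a) g = - zmul a g"
  using zmul_add[of "- a" a g] by (simp add: eq_neg_iff_add_eq_0)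

lemma zmul_diff: "zmul (a - b) g = zmul a g - zmul b g"
  using zmul_add[of a "- b" g] zmul_uminus[of b g] by simp

lemma nmul_zmul: "nmul n (zmul k g) = zmul (int n * k) g"
  by (induction n) (simp_all add: zmul_add algebra_simps)

lemma zmul_eq_0_imp:
  assumes "infinite_order d" "zmul k d = 0"
  shows "k = 0"
proof (rule ccontr)
  assume "k \<noteq> 0"
  then have "nmul (nat \<bar>k\<bar>) d = 0" "nat \<bar>k\<bar> > 0"
    using assms(2) by (auto simp: zmul_def split: if_splits)
  with assms(1) show False
    unfolding infinite_order_def by blast
qed

lemma infinite_order_zmul:
  assumes "infinite_order d" "k \<noteq> 0"
  shows "infinite_order (zmul k d)"
  unfolding infinite_order_def
proof (intro allI impI notI)
  fix n :: nat
  assume "n > 0" "nmul n (zmul k d) = 0"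
  then have "int n * k = 0"
    using zmul_eq_0_imp[OF assms(1), of "int n * k"] by (simp add: nmul_zmul)
  with \<open>n > 0\<close> assms(2) show False by simp
qed

lemma zmul_in_cyclic_subgroup [simp]: "zmul k d \<in> cyclic_subgroup d"
  by (simp add: cyclic_subgroup_def)

lemma cyclic_subgroupE:
  assumes "i \<in> cyclic_subgroup d"
  obtains k where "i = zmul k d"
  using assms by (auto simp: cyclic_subgroup_def)

lemma zero_in_cyclic_subgroup [simp]: "0 \<in> cyclic_subgroup d"
  using zmul_in_cyclic_subgroup[of 0 d] by simp

lemma cyclic_subgroup_add:
  "i \<in> cyclic_subgroup d \<Longrightarrow> j \<in> cyclic_subgroup d \<Longrightarrow> i + j \<in> cyclic_subgroup d"
  by (auto simp: cyclic_subgroup_def zmul_add[symmetric])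

lemma cyclic_subgroup_diff:
  "i \<in> cyclic_subgroup d \<Longrightarrow> j \<in> cyclic_subgroup d \<Longrightarrow> i - j \<in> cyclic_subgroup d"
  by (auto simp: cyclic_subgroup_def zmul_diff[symmetric])

lemma cyclic_subgroup_nmul: "i \<in> cyclic_subgroup d \<Longrightarrow> nmul n i \<in> cyclic_subgroup d"
  by (auto elim: cyclic_subgroupE simp: nmul_zmul)


lemma int_subgroup_mult_closed:
  fixes S :: "int set"
  assumes "0 \<in> S" "\<And>x y. x \<in> S \<Longrightarrow> y \<in> S \<Longrightarrow> x + y \<in> S" "\<And>x. x \<in> S \<Longrightarrow> - x \<in> S" "s \<in> S"
  shows "k * s \<in> S"
proof (induction k rule: int_induct[where k = 0])
  case (step1 i)
  then show ?case
    using assms(2)[OF _ assms(4)] by (simp add: distrib_right)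
next
  case (step2 i)
  then show ?case
    using assms(2)[OF _ assms(3)[OF assms(4)]] by (simp add: left_diff_distrib)
qed (simp add: assms(1))

lemma multiples_in_int_subgroup:
  fixes S :: "int set"
  assumes "0 \<in> S" "\<And>x y. x \<in> S \<Longrightarrow> y \<in> S \<Longrightarrow> x + y \<in> S" "\<And>x. x \<in> S \<Longrightarrow> - x \<in> S"
    and "s \<in> S" "s \<noteq> 0"
  obtains m :: nat where "m > 0" "int m * \<epsilon> \<in> S" "\<And>j. int j * \<epsilon> \<in> S \<Longrightarrow> m dvd j"
proof -
  have mult_closed: "k * x \<in> S" if "x \<in> S" for k x
    using assms(1-3) that by (rule int_subgroup_mult_closed)
  define P where "P n \<longleftrightarrow> n > 0 \<and> int n * \<epsilon> \<in> S" for n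
  have "int (nat \<bar>s\<bar>) * \<epsilon> = (sgn s * \<epsilon>) * s"
    using abs_sgn[of s] by simp
  then have "int (nat \<bar>s\<bar>) * \<epsilon> \<in> S"
    using mult_closed[OF assms(4)] by metis
  then have "P (nat \<bar>s\<bar>)"
    using assms(5) by (simp add: P_def)
  then have m: "P (LEAST n. P n)"
    by (rule LeastI)
  have "(LEAST n. P n) dvd j" if j: "int j * \<epsilon> \<in> S" for j
  proof (rule ccontr)
    let ?m = "LEAST n. P n"
    assume "\<not> ?m dvd j"
    then have "j mod ?m > 0"
      by (simp add: mod_greater_zero_iff_not_dvd)
    moreover have mod_eq: "int (j mod ?m) * \<epsilon> = int j * \<epsilon> + (- int (j div ?m)) * (int ?m * \<epsilon>)"
    proof -
      have "int j = int (j div ?m) * int ?m + int (j mod ?m)"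
        by (simp flip: of_nat_mult of_nat_add)
      then show ?thesis
        by (simp add: algebra_simps)
    qed
    have "int ?m * \<epsilon> \<in> S"
      using m by (simp add: P_def)
    then have "int (j mod ?m) * \<epsilon> \<in> S"
      unfolding mod_eq by (rule assms(2)[OF j mult_closed])
    ultimately have "P (j mod ?m)"
      by (simp add: P_def)
    moreover have "j mod ?m < ?m"
      using m by (simp add: P_def)
    ultimately show False
      using not_less_Least by blast
  qed
  with m show ?thesis
    using that[of "LEAST n. P n"] by (simp add: P_def)
qed


section \<open>Subrings and adjoining an element\<close>

lemma is_subring_UNIV: "is_subring UNIV"
  by (simp add: is_subring_def)

lemma is_subring_power: "is_subring S \<Longrightarrow> x \<in> S \<Longrightarrow> x ^ n \<in> S"
  by (induction n) (simp_all add: is_subring_def)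

lemma is_subring_poly:
  assumes S: "is_subring S" and x: "x \<in> S"
  shows "\<forall>j. coeff p j \<in> S \<Longrightarrow> poly p x \<in> S"
proof (induction p rule: pCons_induct)
  case 0
  then show ?case
    using S by (simp add: is_subring_def)
next
  case (pCons a p)
  have "a \<in> S"
    using pCons(3) coeff_pCons_0[of a p] by metis
  moreover have "\<forall>j. coeff p j \<in> S"
    using pCons(3) coeff_pCons_Suc[of a p] by metis
  ultimately show ?case
    using pCons(2) S x by (simp add: is_subring_def)
qed

definition adjoin :: "'a::comm_ring_1 set \<Rightarrow> 'a \<Rightarrow> 'a set" where
  "adjoin R x = (\<lambda>p. poly p x) ` {p. \<forall>k. coeff p k \<in> R}"

lemma adjoin_add:
  assumes "is_subring R" "y \<in> adjoin R x" "z \<in> adjoin R x"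
  shows "y + z \<in> adjoin R x"
proof -
  obtain p q where "\<forall>k. coeff p k \<in> R" "\<forall>k. coeff q k \<in> R" "y = poly p x" "z = poly q x"
    using assms(2,3) unfolding adjoin_def by blast
  with assms(1) show ?thesis
    unfolding adjoin_def by (auto simp: is_subring_def intro!: image_eqI[of _ _ "p + q"])
qed

lemma monom_in_adjoin:
  assumes "is_subring R" "c \<in> R"
  shows "c * x ^ n \<in> adjoin R x"
  using assms unfolding adjoin_def
  by (auto simp: is_subring_def coeff_monom poly_monom intro!: image_eqI[of _ _ "monom c n"])

lemma adjoin_sum:
  assumes "is_subring R"
  shows "finite I \<Longrightarrow> (\<And>i. i \<in> I \<Longrightarrow> f i \<in> adjoin R x) \<Longrightarrow> sum f I \<in> adjoin R x"
proof (induction I rule: finite_induct)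
  case empty
  show ?case
    using monom_in_adjoin[OF assms, of 0 x 0] assms by (simp add: is_subring_def)
qed (simp add: adjoin_add[OF assms])

lemma polynomial_ring_one_varI:
  assumes "is_subring R" "is_subring S" "R \<subseteq> S" "x \<in> S"
    and "inj_on (\<lambda>p. poly p x) {p. \<forall>k. coeff p k \<in> R}" and "S \<subseteq> adjoin R x"
  shows "polynomial_ring_one_var S"
proof -
  have "adjoin R x \<subseteq> S"
    using assms(2-4) is_subring_poly[of S x] unfolding adjoin_def by blast
  with assms show ?thesis
    unfolding polynomial_ring_one_var_def bij_betw_def adjoin_def by blast
qed

lemma to_fract_power [simp]: "to_fract (x ^ n) = to_fract x ^ n"
  by (induction n) simp_all

lemma add_divide_powers:
  fixes X :: "'a::field"
  assumes "X \<noteq> 0"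
  shows "a / X ^ n1 + b / X ^ n2 = (a * X ^ n2 + b * X ^ n1) / X ^ (n1 + n2)"
  using assms by (simp add: field_simps power_add)

lemma mult_divide_powers:
  fixes X :: "'a::field"
  shows "a / X ^ n1 * (b / X ^ n2) = (a * b) / X ^ (n1 + n2)"
  by (simp add: power_add)

lemma power_fraction_cancel:
  fixes X U V R :: "'a::field"
  assumes "X \<noteq> 0" "U * V = X ^ 2"
  shows "(k * X ^ ((m + 1) * q) * V ^ q / X ^ (n + 2 * q)) * (U * R ^ m / X ^ (m + 1)) ^ q
    = k * R ^ (m * q) / X ^ n"
proof -
  have "U ^ q * V ^ q = X ^ (2 * q)"
    by (simp add: assms(2) power_mult_distrib[symmetric] power_mult)
  with assms(1) show ?thesis
    by (simp add: power_divide power_mult_distrib power_mult[symmetric] power_add field_simps)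
qed


section \<open>Graded integral domains\<close>

locale graded_domain =
  fixes Bc :: "'g::ab_group_add \<Rightarrow> 'b::idom set"
  assumes graded: "graded_ring Bc"
begin

definition homogeneous_decomposition :: "('g \<Rightarrow> 'b) \<Rightarrow> 'b \<Rightarrow> bool" where
  "homogeneous_decomposition c x \<longleftrightarrow>
     (\<forall>i. c i \<in> Bc i) \<and> finite {i. c i \<noteq> 0} \<and> x = (\<Sum>i\<in>{i. c i \<noteq> 0}. c i)"

lemma Bc_0 [simp]: "0 \<in> Bc i"
  and Bc_add: "x \<in> Bc i \<Longrightarrow> y \<in> Bc i \<Longrightarrow> x + y \<in> Bc i"
  and Bc_uminus: "x \<in> Bc i \<Longrightarrow> - x \<in> Bc i"
  using graded unfolding graded_ring_def by simp_all

lemma Bc_mult: "x \<in> Bc i \<Longrightarrow> y \<in> Bc j \<Longrightarrow> x * y \<in> Bc (i + j)"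
  using graded unfolding graded_ring_def by simp

lemma homogeneous_decomposition_ex1: "\<exists>!c. homogeneous_decomposition c x"
  using graded unfolding graded_ring_def homogeneous_decomposition_def by (elim conjE) (rule spec)

lemma Bc_diff: "x \<in> Bc i \<Longrightarrow> y \<in> Bc i \<Longrightarrow> x - y \<in> Bc i"
  unfolding diff_conv_add_uminus by (rule Bc_add[OF _ Bc_uminus])

lemma Bc_sum: "finite S \<Longrightarrow> (\<And>s. s \<in> S \<Longrightarrow> f s \<in> Bc i) \<Longrightarrow> sum f S \<in> Bc i"
  by (induction S rule: finite_induct) (auto intro: Bc_add)

lemma homogeneous_decompositionE:
  obtains c where "homogeneous_decomposition c x"
  using homogeneous_decomposition_ex1 by blast

lemma homogeneous_decomposition_unique:
  "homogeneous_decomposition c x \<Longrightarrow> homogeneous_decomposition c' x \<Longrightarrow> c = c'"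
  using homogeneous_decomposition_ex1 by blast

lemma homogeneous_decomposition_single:
  assumes "x \<in> Bc i"
  shows "homogeneous_decomposition (\<lambda>j. if j = i \<and> x \<noteq> 0 then x else 0) x"
proof -
  have "{j. (if j = i \<and> x \<noteq> 0 then x else 0) \<noteq> 0} = (if x = 0 then {} else {i})"
    by auto
  with assms show ?thesis
    by (simp add: homogeneous_decomposition_def)
qed

lemma homogeneous_sum_eq_0:
  assumes S: "finite S" and inj: "inj_on \<sigma> S" and mem: "\<And>i. i \<in> S \<Longrightarrow> c i \<in> Bc (\<sigma> i)"
    and sum0: "(\<Sum>i\<in>S. c i) = 0" and iS: "i \<in> S"
  shows "c i = 0"
proof -
  define c' where "c' l = (if l \<in> \<sigma> ` S then c (the_inv_into S \<sigma> l) else 0)" for l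
  have c'_\<sigma>: "c' (\<sigma> j) = c j" if "j \<in> S" for j
    using that inj by (simp add: c'_def the_inv_into_f_f)
  have sub: "{l. c' l \<noteq> 0} \<subseteq> \<sigma> ` S"
    by (auto simp: c'_def split: if_splits)
  have "(\<Sum>l\<in>{l. c' l \<noteq> 0}. c' l) = (\<Sum>l\<in>\<sigma> ` S. c' l)"
    by (rule sum.mono_neutral_left) (use S sub in auto)
  also have "\<dots> = (\<Sum>j\<in>S. c j)"
    using inj by (simp add: sum.reindex c'_\<sigma>)
  finally have "homogeneous_decomposition c' 0"
    using sum0 mem finite_subset[OF sub] S c'_\<sigma>
    by (auto simp: homogeneous_decomposition_def c'_def)
  moreover have "homogeneous_decomposition (\<lambda>_. 0) 0"
    by (simp add: homogeneous_decomposition_def)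
  ultimately have "c' = (\<lambda>_. 0)"
    by (rule homogeneous_decomposition_unique)
  then show ?thesis
    using c'_\<sigma>[OF iS] by metis
qed

lemma Bc_factor:
  assumes y: "y \<in> Bc j" "y \<noteq> 0" and xy: "x * y \<in> Bc k"
  shows "x \<in> Bc (k - j)"
proof -
  obtain c where c: "homogeneous_decomposition c x"
    by (rule homogeneous_decompositionE)
  define S where "S = insert (k - j) {i. c i \<noteq> 0}"
  define e where "e i = c i * y - (if i = k - j then x * y else 0)" for i
  have finS: "finite S"
    using c by (simp add: S_def homogeneous_decomposition_def)
  have inj: "inj_on (\<lambda>i. i + j) S"
    by (simp add: inj_on_def)
  have mem: "e i \<in> Bc (i + j)" for i
    using Bc_mult[OF _ y(1), of "c i" i] c xy
    by (auto simp: e_def homogeneous_decomposition_def intro: Bc_diff)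
  have "(\<Sum>i\<in>S. c i) = x"
    using c finS by (auto simp: S_def homogeneous_decomposition_def intro: sum.mono_neutral_right)
  then have "(\<Sum>i\<in>S. e i) = 0"
    using finS by (simp add: e_def sum_subtractf sum_distrib_right[symmetric] S_def)
  then have e0: "e i = 0" if "c i \<noteq> 0" for i
    using homogeneous_sum_eq_0[OF finS inj mem] that by (simp add: S_def)
  have "c i = 0" if "c i \<noteq> 0" "i \<noteq> k - j" for i
    using e0[OF that(1)] that y(2) by (simp add: e_def)
  then have "{i. c i \<noteq> 0} \<subseteq> {k - j}"
    by auto
  then have "x = c (k - j)"
    using c by (auto simp: homogeneous_decomposition_def subset_singleton_iff)
  then show ?thesis
    using c unfolding homogeneous_decomposition_def by metis
qed

lemma one_in_Bc0: "1 \<in> Bc 0"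
proof -
  obtain c where c: "homogeneous_decomposition c 1"
    by (rule homogeneous_decompositionE)
  then obtain i where "c i \<noteq> 0"
    by (fastforce simp: homogeneous_decomposition_def)
  then show ?thesis
    using Bc_factor[of "c i" i 1 i] c by (simp add: homogeneous_decomposition_def)
qed

lemma of_nat_in_Bc0: "of_nat n \<in> Bc 0"
  by (induction n) (auto intro: Bc_add[OF one_in_Bc0])

lemma Bc_power: "x \<in> Bc i \<Longrightarrow> x ^ n \<in> Bc (nmul n i)"
  by (induction n) (auto simp: one_in_Bc0 intro: Bc_mult)

end


section \<open>The Veronese subring\<close>

locale veronese_subring = graded_domain Bc for Bc :: "'g::ab_group_add \<Rightarrow> 'b::idom set" +
  fixes d :: 'g
begin

abbreviation H :: "'g set" where "H \<equiv> cyclic_subgroup d"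
abbreviation Bd :: "'b set" where "Bd \<equiv> veronese Bc d"

lemma veronese_iff: "x \<in> Bd \<longleftrightarrow> (\<exists>c. homogeneous_decomposition c x \<and> {i. c i \<noteq> 0} \<subseteq> H)"
  by (auto simp: veronese_def homogeneous_decomposition_def)

lemma veronese_decompositionE:
  assumes "x \<in> Bd"
  obtains c where "homogeneous_decomposition c x" "{i. c i \<noteq> 0} \<subseteq> H"
  using assms veronese_iff by blast

lemma Bc_in_veronese:
  assumes "i \<in> H" "x \<in> Bc i"
  shows "x \<in> Bd"
  unfolding veronese_iff
  by (rule exI, rule conjI[OF homogeneous_decomposition_single[OF assms(2)]]) (use assms(1) in auto)

lemma Bc_zmul_in_veronese: "x \<in> Bc (zmul k d) \<Longrightarrow> x \<in> Bd"
  by (rule Bc_in_veronese[OF zmul_in_cyclic_subgroup])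

lemma veronese_sumI:
  assumes S: "finite S" and \<sigma>: "\<And>s. s \<in> S \<Longrightarrow> \<sigma> s \<in> H" and f: "\<And>s. s \<in> S \<Longrightarrow> f s \<in> Bc (\<sigma> s)"
  shows "sum f S \<in> Bd"
proof -
  define c where "c i = (\<Sum>s\<in>{s \<in> S. \<sigma> s = i}. f s)" for i
  have supp: "{i. c i \<noteq> 0} \<subseteq> \<sigma> ` S"
  proof
    fix i
    assume "i \<in> {i. c i \<noteq> 0}"
    then have "{s \<in> S. \<sigma> s = i} \<noteq> {}"
      by (auto simp: c_def simp del: Collect_empty_eq)
    then show "i \<in> \<sigma> ` S"
      by auto
  qed
  have "sum f S = (\<Sum>i\<in>\<sigma> ` S. c i)"
    unfolding c_def using S by (rule sum.image_gen)
  also have "\<dots> = (\<Sum>i\<in>{i. c i \<noteq> 0}. c i)"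
    using S supp by (intro sum.mono_neutral_right) auto
  finally have "homogeneous_decomposition c (sum f S)"
    using S supp f finite_subset[OF supp]
    by (auto simp: homogeneous_decomposition_def c_def intro!: Bc_sum)
  with supp \<sigma> show ?thesis
    by (auto simp: veronese_iff)
qed

lemma veronese_0 [simp]: "0 \<in> Bd"
  by (rule Bc_in_veronese[OF zero_in_cyclic_subgroup Bc_0])

lemma veronese_1 [simp]: "1 \<in> Bd"
  by (rule Bc_in_veronese[OF zero_in_cyclic_subgroup one_in_Bc0])

lemma veronese_of_nat [simp]: "of_nat n \<in> Bd"
  by (rule Bc_in_veronese[OF zero_in_cyclic_subgroup of_nat_in_Bc0])

lemma veronese_add:
  assumes "x \<in> Bd" "y \<in> Bd"
  shows "x + y \<in> Bd"
proof -
  obtain c1 where c1: "homogeneous_decomposition c1 x" "{i. c1 i \<noteq> 0} \<subseteq> H"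
    using assms(1) by (rule veronese_decompositionE)
  obtain c2 where c2: "homogeneous_decomposition c2 y" "{i. c2 i \<noteq> 0} \<subseteq> H"
    using assms(2) by (rule veronese_decompositionE)
  have "x + y = sum (case_sum c1 c2) ({i. c1 i \<noteq> 0} <+> {i. c2 i \<noteq> 0})"
    using c1 c2 by (simp add: sum.Plus homogeneous_decomposition_def comp_def)
  also have "\<dots> \<in> Bd"
    using c1 c2 by (intro veronese_sumI[where \<sigma> = "case_sum id id"])
      (auto simp: homogeneous_decomposition_def)
  finally show ?thesis .
qed

lemma veronese_uminus:
  assumes "x \<in> Bd"
  shows "- x \<in> Bd"
proof -
  obtain c where c: "homogeneous_decomposition c x" "{i. c i \<noteq> 0} \<subseteq> H"
    using assms by (rule veronese_decompositionE)
  then have "- x = (\<Sum>i\<in>{i. c i \<noteq> 0}. - c i)"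
    by (simp add: homogeneous_decomposition_def sum_negf)
  also have "\<dots> \<in> Bd"
    using c by (intro veronese_sumI[where \<sigma> = id]) (auto simp: homogeneous_decomposition_def Bc_uminus)
  finally show ?thesis .
qed

lemma veronese_mult:
  assumes "x \<in> Bd" "y \<in> Bd"
  shows "x * y \<in> Bd"
proof -
  obtain c1 where c1: "homogeneous_decomposition c1 x" "{i. c1 i \<noteq> 0} \<subseteq> H"
    using assms(1) by (rule veronese_decompositionE)
  obtain c2 where c2: "homogeneous_decomposition c2 y" "{i. c2 i \<noteq> 0} \<subseteq> H"
    using assms(2) by (rule veronese_decompositionE)
  have "x * y = (\<Sum>(i, j)\<in>{i. c1 i \<noteq> 0} \<times> {i. c2 i \<noteq> 0}. c1 i * c2 j)"
    using c1 c2 by (simp add: homogeneous_decomposition_def sum_product sum.cartesian_product)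
  also have "\<dots> \<in> Bd"
    using c1 c2 by (intro veronese_sumI[where \<sigma> = "\<lambda>(i, j). i + j"])
      (auto simp: homogeneous_decomposition_def intro: cyclic_subgroup_add Bc_mult)
  finally show ?thesis .
qed

lemma veronese_sum: "finite S \<Longrightarrow> (\<And>s. s \<in> S \<Longrightarrow> f s \<in> Bd) \<Longrightarrow> sum f S \<in> Bd"
  by (induction S rule: finite_induct) (auto intro: veronese_add)

lemma veronese_power: "x \<in> Bd \<Longrightarrow> x ^ n \<in> Bd"
  by (induction n) (auto intro: veronese_mult)

lemma degree_in_cyclic_subgroup:
  assumes "x \<in> Bd" "x \<in> Bc i" "x \<noteq> 0"
  shows "i \<in> H"
proof -
  obtain c where "homogeneous_decomposition c x" "{i. c i \<noteq> 0} \<subseteq> H"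
    using assms(1) by (rule veronese_decompositionE)
  moreover have "c = (\<lambda>j. if j = i \<and> x \<noteq> 0 then x else 0)"
    using homogeneous_decomposition_single[OF assms(2)] calculation(1)
    by (rule homogeneous_decomposition_unique[rotated])
  ultimately show ?thesis
    using assms(3) by auto
qed

lemma Bc_zmul_mult:
  "x \<in> Bc (zmul a d) \<Longrightarrow> y \<in> Bc (zmul b d) \<Longrightarrow> c = a + b \<Longrightarrow> x * y \<in> Bc (zmul c d)"
  using Bc_mult by (simp add: zmul_add)

lemma Bc_zmul_power: "x \<in> Bc (zmul a d) \<Longrightarrow> x ^ n \<in> Bc (zmul (int n * a) d)"
  using Bc_power[of x "zmul a d" n] by (simp add: nmul_zmul)

end


section \<open>Homogeneous locally nilpotent derivations\<close>

locale homogeneous_lnd = veronese_subring Bc d for Bc :: "'g::ab_group_add \<Rightarrow> 'b::idom set" and d +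
  fixes D :: "'b \<Rightarrow> 'b" and e :: 'g
  assumes derivation: "derivation_on (veronese Bc d) D"
    and D_shift: "\<And>i x. i \<in> cyclic_subgroup d \<Longrightarrow> x \<in> Bc i \<Longrightarrow> D x \<in> Bc (i + e)"
    and locally_nilpotent: "locally_nilpotent_on (veronese Bc d) D"
    and D_nonzero: "\<exists>x\<in>veronese Bc d. D x \<noteq> 0"
    and rationals: "\<And>n::nat. n \<noteq> 0 \<Longrightarrow> (of_nat n :: 'b) dvd 1"
begin

definition kernel :: "'b set" where
  "kernel = {x \<in> Bd. D x = 0}"

lemma D_in_veronese: "x \<in> Bd \<Longrightarrow> D x \<in> Bd"
  and D_add: "x \<in> Bd \<Longrightarrow> y \<in> Bd \<Longrightarrow> D (x + y) = D x + D y"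
  and D_mult: "x \<in> Bd \<Longrightarrow> y \<in> Bd \<Longrightarrow> D (x * y) = x * D y + y * D x"
  using derivation unfolding derivation_on_def by blast+

lemma D_0 [simp]: "D 0 = 0"
proof -
  have "D 0 + D 0 = D 0 + 0"
    using D_add[OF veronese_0 veronese_0] by simp
  then show ?thesis
    by (rule add_left_imp_eq)
qed

lemma D_1 [simp]: "D 1 = 0"
proof -
  have "D 1 + D 1 = D 1 + 0"
    using D_mult[OF veronese_1 veronese_1] by simp
  then show ?thesis
    by (rule add_left_imp_eq)
qed

lemma D_uminus:
  assumes "x \<in> Bd"
  shows "D (- x) = - D x"
proof -
  have "D x + D (- x) = 0"
    using D_add[OF assms veronese_uminus[OF assms]] by simp
  from minus_unique[OF this] show ?thesis
    by simp
qed

lemma D_diff: "x \<in> Bd \<Longrightarrow> y \<in> Bd \<Longrightarrow> D (x - y) = D x - D y"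
  using D_add[OF _ veronese_uminus, of x y] D_uminus[of y] by simp

lemma D_of_nat [simp]: "D (of_nat n) = 0"
  by (induction n) (simp_all add: D_add)

lemma D_sum: "finite S \<Longrightarrow> (\<And>s. s \<in> S \<Longrightarrow> f s \<in> Bd) \<Longrightarrow> D (sum f S) = (\<Sum>s\<in>S. D (f s))"
  by (induction S rule: finite_induct) (simp_all add: D_add veronese_sum)

lemma kernel_in_veronese: "x \<in> kernel \<Longrightarrow> x \<in> Bd"
  and D_kernel: "x \<in> kernel \<Longrightarrow> D x = 0"
  by (simp_all add: kernel_def)

lemma kernel_0 [simp]: "0 \<in> kernel"
  and kernel_1 [simp]: "1 \<in> kernel"
  and kernel_of_nat [simp]: "of_nat n \<in> kernel"
  by (simp_all add: kernel_def)

lemma kernel_add: "x \<in> kernel \<Longrightarrow> y \<in> kernel \<Longrightarrow> x + y \<in> kernel"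
  and kernel_uminus: "x \<in> kernel \<Longrightarrow> - x \<in> kernel"
  and kernel_mult: "x \<in> kernel \<Longrightarrow> y \<in> kernel \<Longrightarrow> x * y \<in> kernel"
  by (simp_all add: kernel_def veronese_add veronese_uminus veronese_mult D_add D_uminus D_mult)

lemma kernel_power: "x \<in> kernel \<Longrightarrow> x ^ n \<in> kernel"
  by (induction n) (simp_all add: kernel_mult)

lemma D_mult_kernel: "k \<in> kernel \<Longrightarrow> y \<in> Bd \<Longrightarrow> D (k * y) = k * D y"
  by (simp add: kernel_def D_mult)

lemma funpow_D_in_veronese: "x \<in> Bd \<Longrightarrow> (D ^^ n) x \<in> Bd"
  by (induction n) (simp_all add: D_in_veronese)

lemma funpow_D_mult_kernel: "k \<in> kernel \<Longrightarrow> y \<in> Bd \<Longrightarrow> (D ^^ n) (k * y) = k * (D ^^ n) y"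
  by (induction n) (simp_all add: D_mult_kernel funpow_D_in_veronese)

lemma funpow_D_diff: "x \<in> Bd \<Longrightarrow> y \<in> Bd \<Longrightarrow> (D ^^ n) (x - y) = (D ^^ n) x - (D ^^ n) y"
  by (induction n) (simp_all add: D_diff funpow_D_in_veronese)

lemma D_power:
  assumes r: "r \<in> Bd"
  shows "D (r ^ Suc n) = of_nat (Suc n) * r ^ n * D r"
proof (induction n)
  case (Suc n)
  have "D (r ^ Suc (Suc n)) = r * D (r ^ Suc n) + r ^ Suc n * D r"
    using D_mult[OF r veronese_power[OF r]] by (simp only: power_Suc[of r "Suc n"])
  also have "\<dots> = of_nat (Suc (Suc n)) * r ^ Suc n * D r"
    using Suc by (simp add: algebra_simps)
  finally show ?case .
qed simp

lemma funpow_D_power_self: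
  assumes r: "r \<in> Bd" and DDr: "D (D r) = 0"
  shows "(D ^^ n) (r ^ n) = of_nat (fact n) * D r ^ n"
proof (induction n)
  case (Suc n)
  have Dr: "D r \<in> kernel"
    using DDr D_in_veronese[OF r] by (simp add: kernel_def)
  have "(D ^^ Suc n) (r ^ Suc n) = (D ^^ n) (D (r ^ Suc n))"
    by (simp add: funpow_Suc_right del: funpow.simps)
  also have "\<dots> = (D ^^ n) ((of_nat (Suc n) * D r) * r ^ n)"
    using D_power[OF r, of n] by (simp add: algebra_simps)
  also have "\<dots> = (of_nat (Suc n) * D r) * (D ^^ n) (r ^ n)"
    by (rule funpow_D_mult_kernel[OF kernel_mult[OF kernel_of_nat Dr] veronese_power[OF r]])
  finally show ?case
    using Suc by (simp add: algebra_simps)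
qed simp

lemma poly_kernel_coeffs:
  assumes r: "r \<in> Bd"
  shows "\<forall>j. coeff Q j \<in> kernel \<Longrightarrow> poly Q r \<in> Bd \<and> D (poly Q r) = poly (pderiv Q) r * D r"
proof (induction Q rule: pCons_induct)
  case (pCons a p)
  have a: "a \<in> kernel"
    using pCons(3) coeff_pCons_0[of a p] by metis
  have "\<forall>j. coeff p j \<in> kernel"
    using pCons(3) coeff_pCons_Suc[of a p] by metis
  with pCons(2) a r show ?case
    by (simp add: D_add D_mult veronese_add veronese_mult kernel_in_veronese D_kernel
        pderiv_pCons algebra_simps)
qed simp

lemma of_nat_neq_0: "n \<noteq> 0 \<Longrightarrow> (of_nat n :: 'b) \<noteq> 0"
  using rationals[of n] by auto

lemma of_nat_inverse:
  assumes "n \<noteq> 0"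
  obtains w where "w \<in> kernel" "w \<in> Bc 0" "of_nat n * w = 1"
proof -
  from rationals[OF assms] obtain w :: 'b where w: "1 = of_nat n * w"
    by (rule dvdE)
  then have "w \<in> Bc (0 - 0)"
    using Bc_factor[OF of_nat_in_Bc0 of_nat_neq_0[OF assms]] one_in_Bc0 by (simp add: mult.commute)
  moreover from this have "D w = 0"
    using D_mult[OF veronese_of_nat Bc_in_veronese, of 0 w n] w of_nat_neq_0[OF assms] by simp
  ultimately show ?thesis
    using that w Bc_in_veronese[of 0 w] by (simp add: kernel_def)
qed

text \<open>Differentiating a relation Q(r) = 0 of minimal degree gives the relation Q'(r) = 0 of
  smaller degree.\<close>
lemma poly_kernel_coeffs_eq_0:
  assumes r: "r \<in> Bd" and Dr: "D r \<noteq> 0"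
  shows "\<forall>j. coeff Q j \<in> kernel \<Longrightarrow> poly Q r = 0 \<Longrightarrow> Q = 0"
proof (induction "degree Q" arbitrary: Q rule: less_induct)
  case less
  show ?case
  proof (cases "degree Q = 0")
    case True
    then show ?thesis
      using less(3) by (auto elim: degree_eq_zeroE)
  next
    case False
    have pderiv_kernel: "\<forall>j. coeff (pderiv Q) j \<in> kernel"
      using less(2) kernel_mult[OF kernel_add[OF kernel_1 kernel_of_nat]] by (simp add: coeff_pderiv)
    have "poly (pderiv Q) r = 0"
      using poly_kernel_coeffs[OF r less(2)] less(3) Dr by simp
    moreover have "degree (pderiv Q) < degree Q"
      using False degree_le[of "degree Q - 1" "pderiv Q"] by (simp add: coeff_pderiv coeff_eq_0)
    ultimately have "pderiv Q = 0"
      using less(1) pderiv_kernel by blast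
    then have "coeff Q (Suc (degree Q - 1)) = 0"
      using coeff_pderiv[of Q "degree Q - 1"] of_nat_neq_0[of "Suc (degree Q - 1)"] by simp
    with False show ?thesis
      by simp
  qed
qed

text \<open>D shifts all degrees by e, so the D (c i) are the homogeneous components of D x.\<close>
lemma D_eq_0_iff_components:
  assumes c: "homogeneous_decomposition c x" "{i. c i \<noteq> 0} \<subseteq> H"
  shows "D x = 0 \<longleftrightarrow> (\<forall>i. D (c i) = 0)"
proof -
  let ?S = "{i. c i \<noteq> 0}"
  have fin: "finite ?S" and x: "x = (\<Sum>i\<in>?S. c i)" and cBc: "\<And>i. c i \<in> Bc i"
    using c(1) by (simp_all add: homogeneous_decomposition_def)
  have "c i \<in> Bd" if "i \<in> ?S" for i
    using that c(2) cBc Bc_in_veronese by blast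
  then have Dx: "D x = (\<Sum>i\<in>?S. D (c i))"
    unfolding x using D_sum[OF fin] by blast
  show ?thesis
  proof
    assume "D x = 0"
    show "\<forall>i. D (c i) = 0"
    proof
      fix i
      show "D (c i) = 0"
      proof (cases "i \<in> ?S")
        case True
        have inj: "inj_on (\<lambda>i. i + e) ?S"
          by (simp add: inj_on_def)
        have "\<And>j. j \<in> ?S \<Longrightarrow> D (c j) \<in> Bc (j + e)"
          using c(2) cBc D_shift by blast
        from homogeneous_sum_eq_0[OF fin inj this] True Dx \<open>D x = 0\<close> show ?thesis
          by simp
      qed simp
    qed
  qed (simp add: Dx)
qed

lemma homogeneous_not_in_kernel:
  obtains i x where "i \<in> H" "x \<in> Bc i" "D x \<noteq> 0"
proof -
  obtain x where "x \<in> Bd" "D x \<noteq> 0"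
    using D_nonzero by blast
  moreover obtain c where c: "homogeneous_decomposition c x" "{i. c i \<noteq> 0} \<subseteq> H"
    using calculation(1) by (rule veronese_decompositionE)
  ultimately obtain i where "D (c i) \<noteq> 0"
    using D_eq_0_iff_components by blast
  moreover from this have "i \<in> H"
    using c(2) by (cases "c i = 0") auto
  ultimately show ?thesis
    using that c(1) by (auto simp: homogeneous_decomposition_def)
qed

lemma shift_in_cyclic_subgroup: "e \<in> H"
proof -
  obtain i x where "i \<in> H" "x \<in> Bc i" "D x \<noteq> 0"
    by (rule homogeneous_not_in_kernel)
  then have "i + e \<in> H"
    using degree_in_cyclic_subgroup D_in_veronese Bc_in_veronese D_shift by blast
  then have "(i + e) - i \<in> H"
    using cyclic_subgroup_diff \<open>i \<in> H\<close> by blast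
  then show ?thesis
    by simp
qed

lemma funpow_D_shift: "i \<in> H \<Longrightarrow> x \<in> Bc i \<Longrightarrow> (D ^^ n) x \<in> Bc (i + nmul n e)"
proof (induction n)
  case (Suc n)
  then have "D ((D ^^ n) x) \<in> Bc (i + nmul n e + e)"
    using D_shift cyclic_subgroup_add cyclic_subgroup_nmul shift_in_cyclic_subgroup by blast
  then show ?case
    by (simp add: algebra_simps)
qed simp

text \<open>If x is homogeneous with D x nonzero, the last nonzero element of the orbit
  x, D x, D (D x), ... is D r for a homogeneous local slice r.\<close>
lemma homogeneous_local_slice:
  obtains \<rho> r where "\<rho> \<in> H" "r \<in> Bc \<rho>" "D r \<noteq> 0" "D (D r) = 0"
proof -
  obtain i x where ix: "i \<in> H" "x \<in> Bc i" "D x \<noteq> 0"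
    by (rule homogeneous_not_in_kernel)
  obtain n0 where "(D ^^ n0) x = 0"
    using locally_nilpotent ix Bc_in_veronese unfolding locally_nilpotent_on_def by blast
  then have ex: "D (D ((D ^^ n0) x)) = 0"
    by simp
  define k where "k = (LEAST n. D (D ((D ^^ n) x)) = 0)"
  have "D (D ((D ^^ k) x)) = 0"
    unfolding k_def using ex by (rule LeastI)
  moreover have "D ((D ^^ k) x) \<noteq> 0"
  proof (cases k)
    case (Suc k')
    then have "k' < k"
      by simp
    then have "D (D ((D ^^ k') x)) \<noteq> 0"
      unfolding k_def by (rule not_less_Least)
    with Suc show ?thesis
      by simp
  qed (use ix(3) in simp)
  moreover have "i + nmul k e \<in> H"
    using ix(1) cyclic_subgroup_add cyclic_subgroup_nmul shift_in_cyclic_subgroup by blast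
  ultimately show ?thesis
    using that funpow_D_shift[OF ix(1,2), of k] by blast
qed

lemma homogeneous_kernel_element_of_nonzero_degree:
  assumes "x \<in> kernel" "x \<notin> Bc 0"
  obtains \<eta> h where "\<eta> \<in> H" "\<eta> \<noteq> 0" "h \<in> Bc \<eta>" "h \<noteq> 0" "D h = 0"
proof -
  obtain c where c: "homogeneous_decomposition c x" "{i. c i \<noteq> 0} \<subseteq> H"
    using assms(1) kernel_in_veronese veronese_decompositionE by blast
  have cBc: "\<And>i. c i \<in> Bc i" and x: "x = (\<Sum>i\<in>{i. c i \<noteq> 0}. c i)" and fin: "finite {i. c i \<noteq> 0}"
    using c(1) by (simp_all add: homogeneous_decomposition_def)
  have "\<exists>\<eta>. c \<eta> \<noteq> 0 \<and> \<eta> \<noteq> 0"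
  proof (rule ccontr)
    assume "\<nexists>\<eta>. c \<eta> \<noteq> 0 \<and> \<eta> \<noteq> 0"
    then have "c i \<in> Bc 0" if "i \<in> {i. c i \<noteq> 0}" for i
      using that cBc[of i] by auto
    then have "x \<in> Bc 0"
      unfolding x using Bc_sum[OF fin] by blast
    with assms(2) show False ..
  qed
  then obtain \<eta> where \<eta>: "c \<eta> \<noteq> 0" "\<eta> \<noteq> 0"
    by blast
  moreover have "\<eta> \<in> H"
    using \<eta>(1) c(2) by blast
  moreover have "D (c \<eta>) = 0"
    using D_eq_0_iff_components[OF c] D_kernel[OF assms(1)] by simp
  ultimately show ?thesis
    using that[OF _ _ cBc[of \<eta>]] by blast
qed

lemma slice_reduction:
  assumes r: "r \<in> Bd" "D (D r) = 0" and b: "\<beta> \<in> H" "b \<in> Bc \<beta>" "(D ^^ Suc n) b = 0"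
  obtains c where "c \<in> kernel" "c \<in> Bc (\<beta> + nmul n e)" "(D ^^ n) (D r ^ n * b - c * r ^ n) = 0"
proof -
  obtain w where w: "w \<in> kernel" "w \<in> Bc 0" "of_nat (fact n) * w = 1"
    using of_nat_inverse[of "fact n"] by auto
  define c where "c = w * (D ^^ n) b"
  have bBd: "b \<in> Bd"
    using Bc_in_veronese b(1,2) by blast
  have "(D ^^ n) b \<in> kernel"
    using b(3) funpow_D_in_veronese[OF bBd] by (simp add: kernel_def)
  then have c_kernel: "c \<in> kernel"
    unfolding c_def using w(1) by (rule kernel_mult[rotated])
  have "c \<in> Bc (0 + (\<beta> + nmul n e))"
    unfolding c_def using w(2) funpow_D_shift[OF b(1,2)] by (rule Bc_mult)
  moreover have "(D ^^ n) (D r ^ n * b - c * r ^ n) = 0"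
  proof -
    have Dr: "D r \<in> kernel"
      using r D_in_veronese by (simp add: kernel_def)
    have "(D ^^ n) (D r ^ n * b - c * r ^ n) = D r ^ n * (D ^^ n) b - c * (of_nat (fact n) * D r ^ n)"
      using r c_kernel bBd Dr
      by (simp add: funpow_D_diff funpow_D_mult_kernel funpow_D_power_self kernel_power
          veronese_mult veronese_power kernel_in_veronese)
    also have "\<dots> = 0"
      using w(3) by (simp add: c_def algebra_simps)
    finally show ?thesis .
  qed
  ultimately show ?thesis
    using that c_kernel by simp
qed

text \<open>Homogeneous form of the slice theorem: B^(d) localised at D r is its kernel localised
  at D r with the slice r adjoined.\<close>
lemma slice_theorem:
  assumes \<rho>: "\<rho> \<in> H" and r: "r \<in> Bc \<rho>" and DDr: "D (D r) = 0"
  shows "\<beta> \<in> H \<Longrightarrow> b \<in> Bc \<beta> \<Longrightarrow> (D ^^ n) b = 0 \<Longrightarrow>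
    \<exists>N Q. (\<forall>j. coeff Q j \<in> kernel \<and> coeff Q j \<in> Bc (\<beta> + nmul N (\<rho> + e) - nmul j \<rho>)) \<and>
      D r ^ N * b = poly Q r"
proof (induction n arbitrary: b \<beta>)
  case 0
  then show ?case
    by (intro exI[of _ 0] exI[of _ 0]) simp
next
  case (Suc n)
  have rBd: "r \<in> Bd"
    using Bc_in_veronese \<rho> r by blast
  obtain c where c: "c \<in> kernel" "c \<in> Bc (\<beta> + nmul n e)" and Dn: "(D ^^ n) (D r ^ n * b - c * r ^ n) = 0"
    using slice_reduction[OF rBd DDr Suc(2,3,4)] .
  have Dr: "D r \<in> Bc (\<rho> + e)"
    using D_shift[OF \<rho> r] .
  have "D r ^ n * b - c * r ^ n \<in> Bc (\<beta> + nmul n (\<rho> + e))"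
    using Bc_mult[OF Bc_power[OF Dr, of n] Suc(3)] Bc_mult[OF c(2) Bc_power[OF r, of n]]
    by (intro Bc_diff) (simp_all add: nmul_add_right algebra_simps)
  moreover have "\<beta> + nmul n (\<rho> + e) \<in> H"
    using Suc(2) \<rho> shift_in_cyclic_subgroup by (blast intro: cyclic_subgroup_add cyclic_subgroup_nmul)
  ultimately obtain N Q where
      Q: "\<forall>j. coeff Q j \<in> kernel \<and> coeff Q j \<in> Bc (\<beta> + nmul n (\<rho> + e) + nmul N (\<rho> + e) - nmul j \<rho>)"
      and eq: "D r ^ N * (D r ^ n * b - c * r ^ n) = poly Q r"
    using Suc(1) Dn by blast
  define Q' where "Q' = Q + monom (D r ^ N * c) n"
  have "D r \<in> kernel"
    using DDr D_in_veronese[OF rBd] by (simp add: kernel_def)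
  then have "D r ^ N * c \<in> kernel"
    using c(1) by (intro kernel_mult kernel_power)
  moreover have "D r ^ N * c \<in> Bc (\<beta> + nmul (N + n) (\<rho> + e) - nmul n \<rho>)"
    using Bc_mult[OF Bc_power[OF Dr, of N] c(2)] by (simp add: nmul_add nmul_add_right algebra_simps)
  ultimately have "\<forall>j. coeff Q' j \<in> kernel \<and> coeff Q' j \<in> Bc (\<beta> + nmul (N + n) (\<rho> + e) - nmul j \<rho>)"
    using Q by (auto simp: Q'_def coeff_monom nmul_add algebra_simps intro: kernel_add Bc_add)
  moreover have "D r ^ (N + n) * b = poly Q' r"
    using eq by (simp add: Q'_def poly_monom power_add algebra_simps)
  ultimately show ?case
    by blast
qed

definition kernel_degree_differences :: "int set" where
  "kernel_degree_differences = {a - b | a b. \<exists>x y. x \<in> kernel \<and> y \<in> kernel \<and> x \<noteq> 0 \<and> y \<noteq> 0 \<and>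
     x \<in> Bc (zmul a d) \<and> y \<in> Bc (zmul b d)}"

lemma is_subring_kernel: "is_subring kernel"
  by (simp add: is_subring_def kernel_add kernel_mult kernel_uminus)

lemma kernel_degree_differencesI:
  "x \<in> kernel \<Longrightarrow> y \<in> kernel \<Longrightarrow> x \<noteq> 0 \<Longrightarrow> y \<noteq> 0 \<Longrightarrow> x \<in> Bc (zmul a d) \<Longrightarrow>
    y \<in> Bc (zmul b d) \<Longrightarrow> s = a - b \<Longrightarrow> s \<in> kernel_degree_differences"
  unfolding kernel_degree_differences_def by blast

lemma kernel_degree_differencesE:
  assumes "s \<in> kernel_degree_differences"
  obtains x y a b where "x \<in> kernel" "y \<in> kernel" "x \<noteq> 0" "y \<noteq> 0" "x \<in> Bc (zmul a d)"
    "y \<in> Bc (zmul b d)" "s = a - b"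
  using assms unfolding kernel_degree_differences_def by blast

lemma zero_in_kernel_degree_differences: "0 \<in> kernel_degree_differences"
  using one_in_Bc0 by (intro kernel_degree_differencesI[of 1 1 0 0]) simp_all

lemma kernel_degree_differences_add:
  assumes "s1 \<in> kernel_degree_differences" "s2 \<in> kernel_degree_differences"
  shows "s1 + s2 \<in> kernel_degree_differences"
proof -
  obtain x1 y1 a1 b1 where 1: "x1 \<in> kernel" "y1 \<in> kernel" "x1 \<noteq> 0" "y1 \<noteq> 0"
      "x1 \<in> Bc (zmul a1 d)" "y1 \<in> Bc (zmul b1 d)" "s1 = a1 - b1"
    using assms(1) by (rule kernel_degree_differencesE)
  obtain x2 y2 a2 b2 where 2: "x2 \<in> kernel" "y2 \<in> kernel" "x2 \<noteq> 0" "y2 \<noteq> 0"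
      "x2 \<in> Bc (zmul a2 d)" "y2 \<in> Bc (zmul b2 d)" "s2 = a2 - b2"
    using assms(2) by (rule kernel_degree_differencesE)
  show ?thesis
    by (rule kernel_degree_differencesI[OF kernel_mult[OF 1(1) 2(1)] kernel_mult[OF 1(2) 2(2)] _ _
          Bc_zmul_mult[OF 1(5) 2(5) refl] Bc_zmul_mult[OF 1(6) 2(6) refl]])
      (use 1 2 in simp_all)
qed

lemma kernel_degree_differences_uminus:
  "s \<in> kernel_degree_differences \<Longrightarrow> - s \<in> kernel_degree_differences"
  by (erule kernel_degree_differencesE, erule (5) kernel_degree_differencesI) simp

end


section \<open>A cylindrical element from a local slice\<close>

text \<open>The identity
  u u' = (D r)^2 is what lets every degree-0 monomial be written as a fraction of kernel elements
  times a power of t = u r^m / (D r)^(m+1).\<close>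
locale cylinder_data = homogeneous_lnd Bc d D e for Bc :: "'g::ab_group_add \<Rightarrow> 'b::idom set" and d D e +
  fixes r :: 'b and \<rho> \<epsilon> :: int and m :: nat and u u' :: 'b
  assumes shift_eq: "e = zmul \<epsilon> d"
    and slice_degree: "r \<in> Bc (zmul \<rho> d)"
    and D_slice_nonzero: "D r \<noteq> 0"
    and slice: "D (D r) = 0"
    and degree_nonzero: "\<rho> + \<epsilon> \<noteq> 0"
    and m_pos: "m > 0"
    and m_dvd: "\<And>j. int j * \<epsilon> \<in> kernel_degree_differences \<Longrightarrow> m dvd j"
    and u: "u \<in> kernel" "u \<noteq> 0" "u \<in> Bc (zmul (\<rho> + \<epsilon> + int m * \<epsilon>) d)"
    and u': "u' \<in> kernel" "u' \<in> Bc (zmul (\<rho> + \<epsilon> - int m * \<epsilon>) d)"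
    and u_mult_u': "u * u' = D r ^ 2"
begin

abbreviation \<phi> :: int where "\<phi> \<equiv> \<rho> + \<epsilon>"

lemma slice_in_veronese: "r \<in> Bd"
  using Bc_zmul_in_veronese[OF slice_degree] .

lemma D_slice_kernel: "D r \<in> kernel"
  using slice D_in_veronese[OF slice_in_veronese] by (simp add: kernel_def)

lemma D_slice_degree: "D r \<in> Bc (zmul \<phi> d)"
  using D_shift[OF zmul_in_cyclic_subgroup slice_degree] by (simp add: shift_eq zmul_add)

lemma to_fract_D_slice_nonzero: "to_fract (D r) \<noteq> 0"
  using D_slice_nonzero by simp

definition degree0_fractions :: "'b set \<Rightarrow> 'b fract set" where
  "degree0_fractions S =
     {to_fract k / to_fract (D r) ^ n | k n. k \<in> S \<and> k \<in> Bc (zmul (int n * \<phi>) d)}"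

definition t :: "'b fract" where
  "t = to_fract (u * r ^ m) / to_fract (D r) ^ (m + 1)"

lemma degree0_fractionsI:
  "k \<in> S \<Longrightarrow> k \<in> Bc (zmul (int n * \<phi>) d) \<Longrightarrow> z = to_fract k / to_fract (D r) ^ n \<Longrightarrow>
    z \<in> degree0_fractions S"
  unfolding degree0_fractions_def by blast

lemma degree0_fractionsE:
  assumes "z \<in> degree0_fractions S"
  obtains k n where "k \<in> S" "k \<in> Bc (zmul (int n * \<phi>) d)" "z = to_fract k / to_fract (D r) ^ n"
  using assms unfolding degree0_fractions_def by blast

lemma degree0_fractions_mono: "S \<subseteq> S' \<Longrightarrow> degree0_fractions S \<subseteq> degree0_fractions S'"
  unfolding degree0_fractions_def by blast

lemma degree0_localization_eq: "degree0_localization Bc (zmul \<phi> d) (D r) = degree0_fractions UNIV"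
  by (auto simp: degree0_localization_def degree0_fractions_def Fract_conv_to_fract nmul_zmul)

lemma degree0_fractions_add_mult:
  assumes S: "is_subring S" "D r \<in> S"
    and z1: "z1 \<in> degree0_fractions S" and z2: "z2 \<in> degree0_fractions S"
  shows "z1 + z2 \<in> degree0_fractions S" "z1 * z2 \<in> degree0_fractions S"
proof -
  have power_S: "D r ^ n \<in> S" for n
    using S by (rule is_subring_power)
  have power_Bc: "D r ^ n \<in> Bc (zmul (int n * \<phi>) d)" for n
    using Bc_zmul_power[OF D_slice_degree] .
  obtain k1 n1 where 1: "k1 \<in> S" "k1 \<in> Bc (zmul (int n1 * \<phi>) d)" "z1 = to_fract k1 / to_fract (D r) ^ n1"
    using z1 by (rule degree0_fractionsE)
  obtain k2 n2 where 2: "k2 \<in> S" "k2 \<in> Bc (zmul (int n2 * \<phi>) d)" "z2 = to_fract k2 / to_fract (D r) ^ n2"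
    using z2 by (rule degree0_fractionsE)
  show "z1 + z2 \<in> degree0_fractions S"
  proof (rule degree0_fractionsI)
    show "k1 * D r ^ n2 + k2 * D r ^ n1 \<in> S"
      using S(1) 1(1) 2(1) power_S by (simp add: is_subring_def)
    show "k1 * D r ^ n2 + k2 * D r ^ n1 \<in> Bc (zmul (int (n1 + n2) * \<phi>) d)"
      by (rule Bc_add; rule Bc_zmul_mult[OF _ power_Bc]) (use 1 2 in \<open>simp_all add: algebra_simps\<close>)
    show "z1 + z2 = to_fract (k1 * D r ^ n2 + k2 * D r ^ n1) / to_fract (D r) ^ (n1 + n2)"
      using 1(3) 2(3) add_divide_powers[OF to_fract_D_slice_nonzero] by simp
  qed
  show "z1 * z2 \<in> degree0_fractions S"
  proof (rule degree0_fractionsI)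
    show "k1 * k2 \<in> S"
      using S(1) 1(1) 2(1) by (simp add: is_subring_def)
    show "k1 * k2 \<in> Bc (zmul (int (n1 + n2) * \<phi>) d)"
      by (rule Bc_zmul_mult[OF 1(2) 2(2)]) (simp add: algebra_simps)
    show "z1 * z2 = to_fract (k1 * k2) / to_fract (D r) ^ (n1 + n2)"
      using 1(3) 2(3) by (simp only: mult_divide_powers to_fract_mult)
  qed
qed

lemma is_subring_degree0_fractions:
  assumes S: "is_subring S" "D r \<in> S"
  shows "is_subring (degree0_fractions S)"
proof -
  have uminus: "- z \<in> degree0_fractions S" if z: "z \<in> degree0_fractions S" for z
  proof -
    obtain k n where "k \<in> S" "k \<in> Bc (zmul (int n * \<phi>) d)" "z = to_fract k / to_fract (D r) ^ n"
      using z by (rule degree0_fractionsE)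
    with S(1) show ?thesis
      by (intro degree0_fractionsI[of "- k" S n]) (simp_all add: is_subring_def Bc_uminus)
  qed
  have "0 \<in> degree0_fractions S" "1 \<in> degree0_fractions S"
    using S(1) one_in_Bc0 degree0_fractionsI[of 0 S 0] degree0_fractionsI[of 1 S 0]
    by (simp_all add: is_subring_def)
  with uminus degree0_fractions_add_mult[OF S] show ?thesis
    unfolding is_subring_def by blast
qed

lemma t_in_degree0_fractions: "t \<in> degree0_fractions UNIV"
proof (rule degree0_fractionsI)
  show "u * r ^ m \<in> Bc (zmul (int (m + 1) * \<phi>) d)"
    by (rule Bc_zmul_mult[OF u(3) Bc_zmul_power[OF slice_degree]]) (simp add: algebra_simps)
qed (simp_all add: t_def)

lemma t_mult_fraction:
  assumes k: "k \<in> kernel" and Q: "\<forall>j. coeff Q j \<in> kernel"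
  obtains Q' where "\<forall>j. coeff Q' j \<in> kernel"
    "to_fract k / to_fract (D r) ^ n + t * (to_fract (poly Q r) / to_fract (D r) ^ N) =
      to_fract (poly Q' r) / to_fract (D r) ^ (n + (m + 1) + N)"
    "k \<noteq> 0 \<or> Q \<noteq> 0 \<longrightarrow> Q' \<noteq> 0"
proof -
  define w where "w = u * D r ^ n"
  define Q' where "Q' = monom (k * D r ^ (m + 1 + N)) 0 + smult w (monom 1 m * Q)"
  have coeff_Q': "coeff Q' j =
      (if j = 0 then k * D r ^ (m + 1 + N) else 0) + w * (if j < m then 0 else coeff Q (j - m))" for j
    by (simp add: Q'_def coeff_monom_mult)
  have w: "w \<in> kernel" "w \<noteq> 0"
    using u(1,2) D_slice_kernel D_slice_nonzero by (simp_all add: w_def kernel_mult kernel_power)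
  have "\<forall>j. coeff Q' j \<in> kernel"
    unfolding coeff_Q' using k Q w(1) D_slice_kernel by (simp add: kernel_add kernel_mult kernel_power)
  moreover have "to_fract k / to_fract (D r) ^ n + t * (to_fract (poly Q r) / to_fract (D r) ^ N) =
      to_fract (poly Q' r) / to_fract (D r) ^ (n + (m + 1) + N)"
    using to_fract_D_slice_nonzero by (simp add: t_def Q'_def w_def poly_monom field_simps power_add)
  moreover have "Q' \<noteq> 0" if "k \<noteq> 0 \<or> Q \<noteq> 0"
  proof (cases "k = 0")
    case False
    then have "coeff Q' 0 \<noteq> 0"
      using m_pos D_slice_nonzero by (simp add: coeff_Q')
    then show ?thesis
      by auto
  next
    case True
    with that have "coeff Q' (m + degree Q) \<noteq> 0"
      using m_pos w(2) by (simp add: coeff_Q')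
    then show ?thesis
      by auto
  qed
  ultimately show ?thesis
    using that by blast
qed

lemma poly_t_eq_fraction:
  "\<forall>j. coeff p j \<in> degree0_fractions kernel \<Longrightarrow>
    \<exists>N Q. (\<forall>j. coeff Q j \<in> kernel) \<and> poly p t = to_fract (poly Q r) / to_fract (D r) ^ N \<and>
      (p \<noteq> 0 \<longrightarrow> Q \<noteq> 0)"
proof (induction p rule: pCons_induct)
  case 0
  then show ?case
    by (intro exI[of _ 0] exI[of _ 0]) simp
next
  case (pCons c p)
  have "c \<in> degree0_fractions kernel"
    using pCons(3) coeff_pCons_0[of c p] by metis
  then obtain k n where k: "k \<in> kernel" "c = to_fract k / to_fract (D r) ^ n"
    by (rule degree0_fractionsE)
  have "\<forall>j. coeff p j \<in> degree0_fractions kernel"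
    using pCons(3) coeff_pCons_Suc[of c p] by metis
  then obtain N Q where Q: "\<forall>j. coeff Q j \<in> kernel"
      "poly p t = to_fract (poly Q r) / to_fract (D r) ^ N" "p \<noteq> 0 \<longrightarrow> Q \<noteq> 0"
    using pCons(2) by blast
  obtain Q' where Q': "\<forall>j. coeff Q' j \<in> kernel"
      "to_fract k / to_fract (D r) ^ n + t * (to_fract (poly Q r) / to_fract (D r) ^ N) =
        to_fract (poly Q' r) / to_fract (D r) ^ (n + (m + 1) + N)"
      "k \<noteq> 0 \<or> Q \<noteq> 0 \<longrightarrow> Q' \<noteq> 0"
    by (rule t_mult_fraction[OF k(1) Q(1), where n = n and N = N])
  have "poly (pCons c p) t = to_fract (poly Q' r) / to_fract (D r) ^ (n + (m + 1) + N)"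
    using k(2) Q(2) Q'(2) by simp
  moreover have "pCons c p \<noteq> 0 \<longrightarrow> Q' \<noteq> 0"
    using k(2) Q(3) Q'(3) by auto
  ultimately show ?case
    using Q'(1) by blast
qed

lemma inj_on_poly_t: "inj_on (\<lambda>p. poly p t) {p. \<forall>k. coeff p k \<in> degree0_fractions kernel}"
proof (rule inj_onI)
  fix p q
  assume p: "p \<in> {p. \<forall>k. coeff p k \<in> degree0_fractions kernel}"
    and q: "q \<in> {p. \<forall>k. coeff p k \<in> degree0_fractions kernel}" and eq: "poly p t = poly q t"
  have "\<forall>j. coeff (p - q) j \<in> degree0_fractions kernel"
    using p q is_subring_degree0_fractions[OF is_subring_kernel D_slice_kernel]
    by (simp add: is_subring_def diff_conv_add_uminus del: add_uminus_conv_diff)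
  then obtain N Q where Q: "\<forall>j. coeff Q j \<in> kernel"
      "poly (p - q) t = to_fract (poly Q r) / to_fract (D r) ^ N" "p - q \<noteq> 0 \<longrightarrow> Q \<noteq> 0"
    using poly_t_eq_fraction by blast
  then have "poly Q r = 0"
    using eq to_fract_D_slice_nonzero by simp
  then have "Q = 0"
    using poly_kernel_coeffs_eq_0[OF slice_in_veronese D_slice_nonzero Q(1)] by blast
  with Q(3) show "p = q"
    by simp
qed

lemma degree0_monomial_exponent_dvd:
  assumes \<kappa>: "\<kappa> \<in> kernel" "\<kappa> \<noteq> 0" "\<kappa> \<in> Bc (zmul (int n * \<phi> - int j * \<rho>) d)"
  shows "m dvd j"
proof (rule m_dvd)
  show "int j * \<epsilon> \<in> kernel_degree_differences"
  proof (rule kernel_degree_differencesI)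
    show "\<kappa> * D r ^ j \<in> Bc (zmul (int n * \<phi> - int j * \<rho> + int j * \<phi>) d)"
      by (rule Bc_zmul_mult[OF \<kappa>(3) Bc_zmul_power[OF D_slice_degree]]) simp
    show "D r ^ n \<in> Bc (zmul (int n * \<phi>) d)"
      by (rule Bc_zmul_power[OF D_slice_degree])
  qed (use \<kappa>(1,2) D_slice_kernel D_slice_nonzero in \<open>auto simp: kernel_mult kernel_power algebra_simps\<close>)
qed

lemma degree0_term_in_adjoin:
  assumes \<kappa>: "\<kappa> \<in> kernel" "\<kappa> \<in> Bc (zmul (int n * \<phi> - int j * \<rho>) d)"
  shows "to_fract \<kappa> * to_fract r ^ j / to_fract (D r) ^ n \<in> adjoin (degree0_fractions kernel) t"
proof (cases "\<kappa> = 0")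
  case True
  then show ?thesis
    using adjoin_sum[OF is_subring_degree0_fractions[OF is_subring_kernel D_slice_kernel], of "{}"]
    by simp
next
  case False
  then obtain q where j: "j = m * q"
    using degree0_monomial_exponent_dvd[OF \<kappa>(1) _ \<kappa>(2)] by blast
  define c where "c = to_fract (\<kappa> * D r ^ ((m + 1) * q) * u' ^ q) / to_fract (D r) ^ (n + 2 * q)"
  have "c \<in> degree0_fractions kernel"
  proof (rule degree0_fractionsI[OF _ _ c_def])
    show "\<kappa> * D r ^ ((m + 1) * q) * u' ^ q \<in> kernel"
      using \<kappa>(1) D_slice_kernel u'(1) by (simp add: kernel_mult kernel_power)
    show "\<kappa> * D r ^ ((m + 1) * q) * u' ^ q \<in> Bc (zmul (int (n + 2 * q) * \<phi>) d)"
      by (rule Bc_zmul_mult[OF Bc_zmul_mult[OF \<kappa>(2) Bc_zmul_power[OF D_slice_degree] refl]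
            Bc_zmul_power[OF u'(2)]]) (simp add: j algebra_simps)
  qed
  moreover have "c * t ^ q = to_fract \<kappa> * to_fract r ^ j / to_fract (D r) ^ n"
  proof -
    have "c * t ^ q = (to_fract \<kappa> * to_fract (D r) ^ ((m + 1) * q) * to_fract u' ^ q /
        to_fract (D r) ^ (n + 2 * q)) * (to_fract u * to_fract r ^ m / to_fract (D r) ^ (m + 1)) ^ q"
      by (simp only: c_def t_def to_fract_mult to_fract_power)
    also have "\<dots> = to_fract \<kappa> * to_fract r ^ (m * q) / to_fract (D r) ^ n"
      by (rule power_fraction_cancel[OF to_fract_D_slice_nonzero])
        (metis u_mult_u' to_fract_mult to_fract_power)
    finally show ?thesis
      by (simp only: j)
  qed
  ultimately show ?thesis
    using monom_in_adjoin[OF is_subring_degree0_fractions[OF is_subring_kernel D_slice_kernel]] by metis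
qed

lemma degree0_fractions_subset_adjoin: "degree0_fractions UNIV \<subseteq> adjoin (degree0_fractions kernel) t"
proof
  fix z
  assume "z \<in> degree0_fractions UNIV"
  then obtain b n where b: "b \<in> Bc (zmul (int n * \<phi>) d)" and z: "z = to_fract b / to_fract (D r) ^ n"
    by (rule degree0_fractionsE)
  obtain n0 where "(D ^^ n0) b = 0"
    using locally_nilpotent Bc_zmul_in_veronese[OF b] unfolding locally_nilpotent_on_def by blast
  then obtain N Q where
      Q: "\<forall>j. coeff Q j \<in> kernel \<and>
        coeff Q j \<in> Bc (zmul (int n * \<phi>) d + nmul N (zmul \<rho> d + e) - nmul j (zmul \<rho> d))"
      and eq: "D r ^ N * b = poly Q r"
    using slice_theorem[OF zmul_in_cyclic_subgroup slice_degree slice zmul_in_cyclic_subgroup b] by blast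
  have degree: "zmul (int n * \<phi>) d + nmul N (zmul \<rho> d + e) - nmul j (zmul \<rho> d) =
      zmul (int (N + n) * \<phi> - int j * \<rho>) d" for j
    by (simp add: shift_eq nmul_zmul zmul_add[symmetric] zmul_diff[symmetric] algebra_simps)
  have "z = to_fract (poly Q r) / to_fract (D r) ^ (N + n)"
    using to_fract_D_slice_nonzero by (simp add: z eq[symmetric] power_add)
  also have "\<dots> = (\<Sum>j\<le>degree Q. to_fract (coeff Q j) * to_fract r ^ j / to_fract (D r) ^ (N + n))"
    by (simp add: poly_altdef sum_divide_distrib)
  also have "\<dots> \<in> adjoin (degree0_fractions kernel) t"
    using Q by (intro adjoin_sum is_subring_degree0_fractions is_subring_kernel D_slice_kernel
        degree0_term_in_adjoin) (simp_all add: degree)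
  finally show "z \<in> adjoin (degree0_fractions kernel) t" .
qed

lemma D_slice_cylindrical:
  assumes "infinite_order d"
  shows "cylindrical Bc (D r)"
  unfolding cylindrical_def
proof (intro conjI exI)
  show "polynomial_ring_one_var (degree0_localization Bc (zmul \<phi> d) (D r))"
    unfolding degree0_localization_eq
    using is_subring_degree0_fractions[OF is_subring_kernel D_slice_kernel]
      is_subring_degree0_fractions[OF is_subring_UNIV] degree0_fractions_mono[of kernel UNIV]
      t_in_degree0_fractions inj_on_poly_t degree0_fractions_subset_adjoin
    by (intro polynomial_ring_one_varI) auto
qed (use D_slice_nonzero D_slice_degree infinite_order_zmul[OF assms degree_nonzero] in auto)

end


section \<open>Choosing the local slice\<close>

context homogeneous_lnd
begin

text \<open>Multiplying a local slice by a homogeneous kernel element v = a b h keeps it a local slice;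
  a and b realise the least positive multiple m \<epsilon> of the degree of D as a degree difference, and
  h adjusts the degree of D r away from 0.\<close>
lemma cylinder_data_of_slice:
  assumes shift: "e = zmul \<epsilon> d"
    and r: "r \<in> Bc (zmul \<rho> d)" "D r \<noteq> 0" "D (D r) = 0"
    and m: "m > 0" "int m * \<epsilon> = \<alpha> - \<beta>" "\<And>j. int j * \<epsilon> \<in> kernel_degree_differences \<Longrightarrow> m dvd j"
    and a: "a \<in> kernel" "a \<noteq> 0" "a \<in> Bc (zmul \<alpha> d)"
    and b: "b \<in> kernel" "b \<noteq> 0" "b \<in> Bc (zmul \<beta> d)"
    and h: "h \<in> kernel" "h \<noteq> 0" "h \<in> Bc (zmul \<eta> d)" "\<rho> + \<epsilon> + \<alpha> + \<beta> + \<eta> \<noteq> 0"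
  shows "cylinder_data Bc d D e (a * b * h * r) (\<alpha> + \<beta> + \<eta> + \<rho>) \<epsilon> m
    (a * a * h * D r) (b * b * h * D r)"
proof -
  have Dr: "D r \<in> kernel" "D r \<in> Bc (zmul (\<rho> + \<epsilon>) d)"
    using r D_in_veronese[OF Bc_zmul_in_veronese] D_shift[OF zmul_in_cyclic_subgroup r(1)]
    by (simp_all add: kernel_def shift zmul_add)
  have v: "a * b * h \<in> kernel" "a * b * h \<noteq> 0"
    using a b h by (simp_all add: kernel_mult)
  have D_vr: "D (a * b * h * r) = a * b * h * D r"
    using D_mult_kernel[OF v(1) Bc_zmul_in_veronese[OF r(1)]] .
  show ?thesis
  proof unfold_locales
    show "a * b * h * r \<in> Bc (zmul (\<alpha> + \<beta> + \<eta> + \<rho>) d)"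
      using Bc_zmul_mult[OF Bc_zmul_mult[OF Bc_zmul_mult[OF a(3) b(3) refl] h(3) refl] r(1) refl] .
    show "D (a * b * h * r) \<noteq> 0" "D (D (a * b * h * r)) = 0"
      using D_vr v Dr r(2) D_mult_kernel[OF v(1) kernel_in_veronese[OF Dr(1)]] D_kernel[OF Dr(1)]
      by simp_all
    show "a * a * h * D r \<in> Bc (zmul (\<alpha> + \<beta> + \<eta> + \<rho> + \<epsilon> + int m * \<epsilon>) d)"
      by (rule Bc_zmul_mult[OF Bc_zmul_mult[OF Bc_zmul_mult[OF a(3) a(3) refl] h(3) refl] Dr(2)])
        (simp add: m(2))
    show "b * b * h * D r \<in> Bc (zmul (\<alpha> + \<beta> + \<eta> + \<rho> + \<epsilon> - int m * \<epsilon>) d)"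
      by (rule Bc_zmul_mult[OF Bc_zmul_mult[OF Bc_zmul_mult[OF b(3) b(3) refl] h(3) refl] Dr(2)])
        (simp add: m(2))
    show "a * a * h * D r * (b * b * h * D r) = D (a * b * h * r) ^ 2"
      unfolding D_vr by (simp add: power2_eq_square algebra_simps)
  qed (use shift m a b h Dr r(2) in \<open>simp_all add: kernel_mult algebra_simps\<close>)
qed

lemma kernel_element_avoiding_degree:
  assumes "\<exists>x\<in>Bd. D x = 0 \<and> x \<notin> Bc 0"
  obtains h \<eta> where "h \<in> kernel" "h \<noteq> 0" "h \<in> Bc (zmul \<eta> d)" "\<eta> \<noteq> 0"
proof -
  obtain \<eta>0 h where "\<eta>0 \<in> H" "\<eta>0 \<noteq> 0" "h \<in> Bc \<eta>0" "h \<noteq> 0" "D h = 0"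
    using assms homogeneous_kernel_element_of_nonzero_degree by (auto simp: kernel_def)
  moreover obtain \<eta> where "\<eta>0 = zmul \<eta> d"
    using calculation(1) by (rule cyclic_subgroupE)
  moreover from calculation have "\<eta> \<noteq> 0"
    by auto
  ultimately show ?thesis
    using that[of h \<eta>] Bc_in_veronese[of \<eta>0 h] by (simp add: kernel_def)
qed

lemma cylinder_data_exists:
  assumes "\<exists>x\<in>Bd. D x = 0 \<and> x \<notin> Bc 0"
  obtains r \<rho> \<epsilon> m u u' where "cylinder_data Bc d D e r \<rho> \<epsilon> m u u'"
proof -
  obtain \<epsilon> where shift: "e = zmul \<epsilon> d"
    using shift_in_cyclic_subgroup by (rule cyclic_subgroupE)
  obtain \<rho>0 r where r: "\<rho>0 \<in> H" "r \<in> Bc \<rho>0" "D r \<noteq> 0" "D (D r) = 0"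
    by (rule homogeneous_local_slice)
  obtain \<rho> where \<rho>: "\<rho>0 = zmul \<rho> d"
    using r(1) by (rule cyclic_subgroupE)
  obtain h \<eta> where h: "h \<in> kernel" "h \<noteq> 0" "h \<in> Bc (zmul \<eta> d)" "\<eta> \<noteq> 0"
    using assms by (rule kernel_element_avoiding_degree)
  have "\<eta> \<in> kernel_degree_differences"
    using h one_in_Bc0 by (intro kernel_degree_differencesI[of h 1 \<eta> 0]) simp_all
  then obtain m where m: "m > 0" "int m * \<epsilon> \<in> kernel_degree_differences"
      "\<And>j. int j * \<epsilon> \<in> kernel_degree_differences \<Longrightarrow> m dvd j"
    using multiples_in_int_subgroup[OF zero_in_kernel_degree_differences kernel_degree_differences_add
        kernel_degree_differences_uminus _ h(4)] by blast
  obtain a b \<alpha> \<beta> where ab: "a \<in> kernel" "b \<in> kernel" "a \<noteq> 0" "b \<noteq> 0" "a \<in> Bc (zmul \<alpha> d)"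
      "b \<in> Bc (zmul \<beta> d)" "int m * \<epsilon> = \<alpha> - \<beta>"
    using m(2) by (rule kernel_degree_differencesE)
  obtain h' \<eta>' where h': "h' \<in> kernel" "h' \<noteq> 0" "h' \<in> Bc (zmul \<eta>' d)" "\<rho> + \<epsilon> + \<alpha> + \<beta> + \<eta>' \<noteq> 0"
  proof (cases "\<rho> + \<epsilon> + \<alpha> + \<beta> = 0")
    case True
    with h that show ?thesis
      by simp
  next
    case False
    with one_in_Bc0 that[of 1 0] show ?thesis
      by simp
  qed
  show ?thesis
    using cylinder_data_of_slice[OF shift r(2,3,4)[unfolded \<rho>] m(1) ab(7) m(3) ab(1,3,5) ab(2,4,6) h'] that
    by blast
qed

end

theorem corollary4p5:
  fixes Bc :: "'g::ab_group_add \<Rightarrow> 'b::idom set"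
    and d :: 'g and D :: "'b \<Rightarrow> 'b"
  assumes graded: "graded_ring Bc"
    and containsQ: "\<forall>n::nat. n \<noteq> 0 \<longrightarrow> (of_nat n :: 'b) dvd 1"
    and d_inf: "infinite_order d"
    and hder: "homogeneous_derivation_on Bc d D"
    and lnd: "locally_nilpotent_on (veronese Bc d) D"
    and nonzero: "\<exists>x\<in>veronese Bc d. D x \<noteq> 0"
    and ker_not_sub: "\<exists>x\<in>veronese Bc d. D x = 0 \<and> x \<notin> Bc 0"
  shows "\<exists>f\<in>D ` veronese Bc d. D f = 0 \<and> cylindrical Bc f"
proof -
  obtain e where "derivation_on (veronese Bc d) D" "\<forall>i\<in>cyclic_subgroup d. \<forall>x\<in>Bc i. D x \<in> Bc (i + e)"
    using hder unfolding homogeneous_derivation_on_def by blast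
  then interpret homogeneous_lnd Bc d D e
    using graded lnd nonzero containsQ by unfold_locales blast+
  obtain r \<rho> \<epsilon> m u u' where "cylinder_data Bc d D e r \<rho> \<epsilon> m u u'"
    using ker_not_sub by (rule cylinder_data_exists)
  then interpret cylinder_data Bc d D e r \<rho> \<epsilon> m u u' .
  show ?thesis
    using slice_in_veronese slice D_slice_cylindrical[OF d_inf] by blast
qed

end
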